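(* For every $k \in \mathbb{N}$, there exists a digraph $G_k$ with $\kappa'(G_k) \ge k$ such that $G_k$ contains no subdivision of $\overleftrightarrow{K}_4$.
   Context: Digraphs are finite, loopless, have no parallel arcs, but may contain digons. $\kappa'(D)$ is the strong arc-connectivity: $D$ is strongly $k$-arc-connected if $D-E$ is strongly connected for every set $E$ of at most $k-1$ arcs, and $\kappa'(D)$ is the largest such $k$. $\overleftrightarrow{K}_4$ is the bioriented complete graph on four vertices (both arcs $(u,v),(v,u)$ for every pair of distinct vertices). A subdivision of a digraph $F$ is obtained by replacing each arc $(x,y)$ by a directed $x$-$y$-path, with paths for different arcs internally vertex-disjoint. *)

theory Defs
  imports Main
begin

text \<open>A digraph is a pair (V, A): finite vertex set, arc set A \<subseteq> V \<times> V, loopless.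
  Parallel arcs are impossible since A is a set; digons (both (u,v),(v,u)) are allowed.\<close>
definition digraph :: "'a set \<Rightarrow> ('a \<times> 'a) set \<Rightarrow> bool" where
  "digraph V A \<longleftrightarrow> finite V \<and> A \<subseteq> V \<times> V \<and> (\<forall>v. (v, v) \<notin> A)"

definition strongly_connected :: "'a set \<Rightarrow> ('a \<times> 'a) set \<Rightarrow> bool" where
  "strongly_connected V A \<longleftrightarrow> (\<forall>u\<in>V. \<forall>v\<in>V. (u, v) \<in> A\<^sup>*)"

definition strongly_k_arc_connected :: "'a set \<Rightarrow> ('a \<times> 'a) set \<Rightarrow> nat \<Rightarrow> bool" where
  "strongly_k_arc_connected V A k \<longleftrightarrow>
     (\<forall>E. E \<subseteq> A \<and> card E + 1 \<le> k \<longrightarrow> strongly_connected V (A - E))"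

definition dpath :: "('a \<times> 'a) set \<Rightarrow> 'a list \<Rightarrow> bool" where
  "dpath A p \<longleftrightarrow> 2 \<le> length p \<and> distinct p \<and> (\<forall>i. i + 1 < length p \<longrightarrow> (p ! i, p ! (i + 1)) \<in> A)"

definition inner :: "'a list \<Rightarrow> 'a list" where
  "inner p = butlast (tl p)"

definition contains_subdivision_biK4 :: "'a set \<Rightarrow> ('a \<times> 'a) set \<Rightarrow> bool" where
  "contains_subdivision_biK4 V A \<longleftrightarrow>
     (\<exists>(b :: nat \<Rightarrow> 'a) (P :: nat \<Rightarrow> nat \<Rightarrow> 'a list).
        inj_on b {..<4} \<and> b ` {..<4} \<subseteq> V \<and>
        (\<forall>i<4. \<forall>j<4. i \<noteq> j \<longrightarrow>
            dpath A (P i j) \<and> hd (P i j) = b i \<and> last (P i j) = b j \<and>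
            set (inner (P i j)) \<inter> b ` {..<4} = {}) \<and>
        (\<forall>i<4. \<forall>j<4. \<forall>i'<4. \<forall>j'<4. i \<noteq> j \<and> i' \<noteq> j' \<and> (i, j) \<noteq> (i', j') \<longrightarrow>
            set (inner (P i j)) \<inter> set (inner (P i' j')) = {}))"

end

(*
  G_d has a hub N, an arcless copy of the vertex set of the complete d-ary tree T_d of depth d,
  and for every w a private copy T^w of T_d; inside a tree every vertex points to its children
  and to all its ancestors, so even a leaf has d out-neighbours. Each vertex of T^w points to w,
  and w' points to all of T^w whenever w points to w' in T_d. Every vertex reaches the root of N,
  and is reached from it, along steps that have d arc-disjoint routes, so every cut of G_d
  separating two vertices has d arcs.

  Call g a gate of U if every arc leaving U meets g. If U separates two branch vertices of a
  subdivision of the bioriented K_4, then g is one of them: otherwise g is an inner vertex of the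
  path between them and, via the third branch vertex, of a second path. T^w has gate w, and the
  hub subtree at c together with the copies attached to it has gate c.
  If all branch vertices lie in N, the gates at the children of their deepest common ancestor c
  make two of them distinct children of c, and the region of one of these children together with
  T^c has gate c and separates the two. If a branch vertex lies in T^w, then at least three do.
  Split them at a child c' of their deepest common ancestor c: a path from a branch vertex outside
  the subtree of T^w at c' to one inside passes through w or uses the arc from c to c'. Each route
  serves at most one path, so there are at most two such paths, and at most one if w is itself a
  branch vertex. But with p branch vertices outside and q inside there are pq >= p + q - 1 such
  paths, that is at least 3, or at least 2 if the fourth branch vertex is w.
*)
theory Submission
  imports Defs "HOL-Library.Sublist" "HOL-Library.Countable"
begin

definition out_arcs :: "('a \<times> 'a) set \<Rightarrow> 'a set \<Rightarrow> ('a \<times> 'a) set" where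
  "out_arcs A S = {e \<in> A. fst e \<in> S \<and> snd e \<notin> S}"

text \<open>The cut form of Menger's condition for k arc-disjoint a-b paths; unlike the path form it
  is obviously transitive.\<close>
definition arc_linked :: "('a \<times> 'a) set \<Rightarrow> nat \<Rightarrow> 'a \<Rightarrow> 'a \<Rightarrow> bool" where
  "arc_linked A k a b \<longleftrightarrow> (\<forall>S. a \<in> S \<longrightarrow> b \<notin> S \<longrightarrow> k \<le> card (out_arcs A S))"

lemma arc_linked_refl: "arc_linked A k a a"
  unfolding arc_linked_def by auto

lemma arc_linked_trans: "arc_linked A k a b \<Longrightarrow> arc_linked A k b c \<Longrightarrow> arc_linked A k a c"
  unfolding arc_linked_def by metis

lemma arc_linked_via_two_paths:
  assumes "finite A" and "\<forall>v. (v, v) \<notin> A" and "inj_on f {..<k}"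
    and arcs: "\<And>i. i < k \<Longrightarrow> (a, f i) \<in> A \<and> (f i, b) \<in> A"
  shows "arc_linked A k a b"
  unfolding arc_linked_def
proof (intro allI impI)
  fix S assume "a \<in> S" "b \<notin> S"
  define g where "g i = (if f i \<in> S then (f i, b) else (a, f i))" for i
  have "g ` {..<k} \<subseteq> out_arcs A S"
    using arcs \<open>a \<in> S\<close> \<open>b \<notin> S\<close> by (auto simp: g_def out_arcs_def)
  moreover have "inj_on g {..<k}"
  proof (rule inj_onI)
    fix i j assume "i \<in> {..<k}" "j \<in> {..<k}" "g i = g j"
    moreover have "f i \<noteq> a" "f j \<noteq> a"
      using arcs \<open>i \<in> {..<k}\<close> \<open>j \<in> {..<k}\<close> assms(2) by force+
    ultimately show "i = j"
      using \<open>inj_on f {..<k}\<close> by (auto simp: g_def inj_on_def split: if_splits)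
  qed
  ultimately show "k \<le> card (out_arcs A S)"
    using card_inj_on_le[of g "{..<k}"] \<open>finite A\<close> by (simp add: out_arcs_def)
qed

lemma arc_linked_via_in_neighbours:
  assumes "finite A" and "inj_on f {..<k}"
    and arcs: "\<And>i. i < k \<Longrightarrow> (f i, b) \<in> A \<and> arc_linked A k a (f i)"
  shows "arc_linked A k a b"
  unfolding arc_linked_def
proof (intro allI impI)
  fix S assume "a \<in> S" "b \<notin> S"
  show "k \<le> card (out_arcs A S)"
  proof (cases "\<exists>i<k. f i \<notin> S")
    case True
    then show ?thesis using arcs \<open>a \<in> S\<close> unfolding arc_linked_def by blast
  next
    case False
    then have "(\<lambda>i. (f i, b)) ` {..<k} \<subseteq> out_arcs A S"
      using arcs \<open>b \<notin> S\<close> by (auto simp: out_arcs_def)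
    moreover have "inj_on (\<lambda>i. (f i, b)) {..<k}"
      using \<open>inj_on f {..<k}\<close> by (auto simp: inj_on_def)
    moreover have "finite (out_arcs A S)" using \<open>finite A\<close> by (simp add: out_arcs_def)
    ultimately show ?thesis using card_inj_on_le by fastforce
  qed
qed

lemma strongly_k_arc_connected_if_arc_linked:
  assumes "finite A" and linked: "\<And>u v. u \<in> V \<Longrightarrow> v \<in> V \<Longrightarrow> arc_linked A k u v"
  shows "strongly_k_arc_connected V A k"
  unfolding strongly_k_arc_connected_def strongly_connected_def
proof (intro allI impI ballI)
  fix E u v assume E: "E \<subseteq> A \<and> card E + 1 \<le> k" and "u \<in> V" "v \<in> V"
  show "(u, v) \<in> (A - E)\<^sup>*"
  proof (rule ccontr)
    assume "(u, v) \<notin> (A - E)\<^sup>*"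
    define S where "S = {y. (u, y) \<in> (A - E)\<^sup>*}"
    have "out_arcs A S \<subseteq> E"
    proof (clarsimp simp: out_arcs_def)
      fix x y assume "(x, y) \<in> A" "x \<in> S" "y \<notin> S"
      then show "(x, y) \<in> E"
        unfolding S_def by (metis DiffI mem_Collect_eq rtrancl_into_rtrancl)
    qed
    moreover have "k \<le> card (out_arcs A S)"
    proof -
      have "u \<in> S" "v \<notin> S" using \<open>(u, v) \<notin> (A - E)\<^sup>*\<close> by (simp_all add: S_def)
      then show ?thesis using linked[OF \<open>u \<in> V\<close> \<open>v \<in> V\<close>] unfolding arc_linked_def by blast
    qed
    moreover have "finite E" using E \<open>finite A\<close> by (meson finite_subset)
    ultimately have "k \<le> card E" by (meson card_mono le_trans)
    then show False using E by simp
  qed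
qed

lemma rtrancl_map_prod: "(x, y) \<in> R\<^sup>* \<Longrightarrow> (f x, f y) \<in> (map_prod f f ` R)\<^sup>*"
  by (induction rule: rtrancl_induct) (auto intro: rtrancl_into_rtrancl)

lemma strongly_k_arc_connected_image:
  assumes "inj_on f V" and "A \<subseteq> V \<times> V" and "strongly_k_arc_connected V A k"
  shows "strongly_k_arc_connected (f ` V) (map_prod f f ` A) k"
  unfolding strongly_k_arc_connected_def strongly_connected_def
proof (intro allI impI ballI)
  fix E' u' v' assume E': "E' \<subseteq> map_prod f f ` A \<and> card E' + 1 \<le> k"
    and "u' \<in> f ` V" "v' \<in> f ` V"
  define E where "E = {e \<in> A. map_prod f f e \<in> E'}"
  have "inj_on (map_prod f f) A"
    using map_prod_inj_on[OF \<open>inj_on f V\<close> \<open>inj_on f V\<close>] \<open>A \<subseteq> V \<times> V\<close> by (rule inj_on_subset)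
  then have "card (map_prod f f ` E) = card E"
    by (rule card_image[OF inj_on_subset]) (simp add: E_def)
  moreover have "E' \<subseteq> map_prod f f ` E"
  proof
    fix e' assume "e' \<in> E'"
    then have "e' \<in> map_prod f f ` A" using E' by blast
    then obtain e where "e \<in> A" "e' = map_prod f f e" by (rule imageE) simp
    then show "e' \<in> map_prod f f ` E" using \<open>e' \<in> E'\<close> by (simp add: E_def)
  qed
  then have "map_prod f f ` E = E'" by (auto simp: E_def)
  ultimately have "E \<subseteq> A \<and> card E + 1 \<le> k" using E' by (simp add: E_def)
  then have "\<forall>u\<in>V. \<forall>v\<in>V. (u, v) \<in> (A - E)\<^sup>*"
    using assms(3) unfolding strongly_k_arc_connected_def strongly_connected_def by blast
  moreover obtain u v where "u \<in> V" "v \<in> V" "u' = f u" "v' = f v"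
    using \<open>u' \<in> f ` V\<close> \<open>v' \<in> f ` V\<close> by blast
  ultimately have "(u', v') \<in> (map_prod f f ` (A - E))\<^sup>*"
    using rtrancl_map_prod[of u v "A - E" f] by simp
  moreover have "map_prod f f ` (A - E) \<subseteq> map_prod f f ` A - E'" by (auto simp: E_def)
  ultimately show "(u', v') \<in> (map_prod f f ` A - E')\<^sup>*"
    using rtrancl_mono[of "map_prod f f ` (A - E)"] by blast
qed

lemma digraph_image:
  assumes "inj_on f V" and "digraph V A"
  shows "digraph (f ` V) (map_prod f f ` A)"
  using assms unfolding digraph_def by (auto dest: inj_onD)

lemma set_inner_subset: "set (inner p) \<subseteq> set p"
  unfolding inner_def by (cases p) (auto dest: in_set_butlastD)

lemma inner_map: "inner (map f p) = map f (inner p)"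
  by (simp add: inner_def map_butlast map_tl)

lemma in_set_innerI:
  assumes "y \<in> set p" "y \<noteq> hd p" "y \<noteq> last p"
  shows "y \<in> set (inner p)"
proof -
  obtain a q where p: "p = a # q" using assms by (cases p) auto
  then have "y \<in> set q" "y \<noteq> last q" using assms by (auto split: if_splits)
  then have "y \<in> set (butlast q)" by (induction q) (auto split: if_splits)
  then show ?thesis using p by (simp add: inner_def)
qed

lemma dpath_set_subset:
  assumes "dpath A p" and "A \<subseteq> V \<times> V"
  shows "set p \<subseteq> V"
proof
  fix x assume "x \<in> set p"
  then obtain i where i: "i < length p" "p ! i = x" by (meson in_set_conv_nth)
  have arc: "(p ! j, p ! (j + 1)) \<in> A" if "j + 1 < length p" for j
    using assms(1) that by (simp add: dpath_def)
  have "2 \<le> length p" using assms(1) by (simp add: dpath_def)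
  then consider "i + 1 < length p" | "i = (i - 1) + 1" "(i - 1) + 1 < length p"
    using i by linarith
  then show "x \<in> V" using arc assms(2) i by cases (metis mem_Sigma_iff subsetD)+
qed

lemma dpath_map:
  assumes "dpath A p" and "inj_on f (set p)"
  shows "dpath (map_prod f f ` A) (map f p)"
  using assms by (auto simp: dpath_def distinct_map)

lemma ex_nth_leaving:
  "hd p \<in> U \<Longrightarrow> x \<in> set p \<Longrightarrow> x \<notin> U \<Longrightarrow> \<exists>m. Suc m < length p \<and> p ! m \<in> U \<and> p ! Suc m \<notin> U"
proof (induction p)
  case (Cons a q)
  show ?case
  proof (cases "q \<noteq> [] \<and> hd q \<in> U")
    case True
    then obtain m where "Suc m < length q" "q ! m \<in> U" "q ! Suc m \<notin> U"
      using Cons by auto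
    then show ?thesis by (intro exI[of _ "Suc m"]) auto
  next
    case False
    then show ?thesis using Cons.prems by (intro exI[of _ 0]) (cases q, auto)
  qed
qed simp

lemma dpath_leaves_set:
  assumes "dpath A p" "hd p \<in> U" "x \<in> set p" "x \<notin> U"
  shows "\<exists>u v. (u, v) \<in> A \<and> u \<in> U \<and> v \<notin> U \<and> u \<in> set p \<and> v \<in> set p"
proof -
  obtain m where "Suc m < length p" "p ! m \<in> U" "p ! Suc m \<notin> U"
    using ex_nth_leaving assms(2-4) by metis
  moreover from this have "(p ! m, p ! Suc m) \<in> A" using assms(1) by (simp add: dpath_def)
  ultimately show ?thesis by (meson Suc_lessD nth_mem)
qed

definition gate :: "('a \<times> 'a) set \<Rightarrow> 'a set \<Rightarrow> 'a \<Rightarrow> bool" where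
  "gate A U g \<longleftrightarrow> (\<forall>x y. (x, y) \<in> A \<longrightarrow> x \<in> U \<longrightarrow> y \<notin> U \<longrightarrow> x = g \<or> y = g)"

lemma gate_on_dpath:
  assumes "gate A U g" "dpath A p" "hd p \<in> U" "x \<in> set p" "x \<notin> U"
  shows "g \<in> set p"
  using dpath_leaves_set[OF assms(2-5)] assms(1) unfolding gate_def by metis

locale biK4_subdivision =
  fixes A :: "('a \<times> 'a) set" and b :: "nat \<Rightarrow> 'a" and P :: "nat \<Rightarrow> nat \<Rightarrow> 'a list"
  assumes inj_branch: "inj_on b {..<4}"
    and path: "\<And>i j. i < 4 \<Longrightarrow> j < 4 \<Longrightarrow> i \<noteq> j \<Longrightarrow>
      dpath A (P i j) \<and> hd (P i j) = b i \<and> last (P i j) = b j \<and> set (inner (P i j)) \<inter> b ` {..<4} = {}"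
    and inner_disjoint: "\<And>i j i' j'. i < 4 \<Longrightarrow> j < 4 \<Longrightarrow> i' < 4 \<Longrightarrow> j' < 4 \<Longrightarrow>
      i \<noteq> j \<Longrightarrow> i' \<noteq> j' \<Longrightarrow> (i, j) \<noteq> (i', j') \<Longrightarrow>
      set (inner (P i j)) \<inter> set (inner (P i' j')) = {}"

lemma contains_subdivision_biK4_iff:
  "contains_subdivision_biK4 V A \<longleftrightarrow> (\<exists>b P. b ` {..<4} \<subseteq> V \<and> biK4_subdivision A b P)"
  unfolding contains_subdivision_biK4_def biK4_subdivision_def by (intro ex_cong1 iffI) auto

lemma biK4_subdivision_image:
  assumes "biK4_subdivision A b P" and "inj_on f V" and "A \<subseteq> V \<times> V" and "b ` {..<4} \<subseteq> V"
  shows "biK4_subdivision (map_prod f f ` A) (f \<circ> b) (\<lambda>i j. map f (P i j))"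
proof -
  interpret biK4_subdivision A b P by fact
  have path_in_V: "set (P i j) \<subseteq> V" if "i < 4" "j < 4" "i \<noteq> j" for i j
    using dpath_set_subset[OF conjunct1[OF path[OF that]] assms(3)] .
  show ?thesis
  proof
    show "inj_on (f \<circ> b) {..<4}"
      using inj_branch assms(2,4) by (simp add: comp_inj_on inj_on_subset)
  next
    fix i j :: nat assume ij: "i < 4" "j < 4" "i \<noteq> j"
    have "P i j \<noteq> []" using path[OF ij] by (auto simp: dpath_def)
    moreover have inj: "inj_on f (set (P i j) \<union> b ` {..<4})"
      using inj_on_subset[OF assms(2)] path_in_V[OF ij] assms(4) by simp
    moreover have "set (inner (map f (P i j))) \<inter> (f \<circ> b) ` {..<4} =
        f ` (set (inner (P i j)) \<inter> b ` {..<4})"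
      using inj_on_image_Int[OF inj, of "set (inner (P i j))" "b ` {..<4}"] set_inner_subset[of "P i j"]
      by (auto simp: inner_map image_image)
    ultimately show "dpath (map_prod f f ` A) (map f (P i j)) \<and> hd (map f (P i j)) = (f \<circ> b) i \<and>
        last (map f (P i j)) = (f \<circ> b) j \<and> set (inner (map f (P i j))) \<inter> (f \<circ> b) ` {..<4} = {}"
      using path[OF ij] dpath_map[of A "P i j" f] by (simp add: hd_map last_map inj_on_Un)
  next
    fix i j i' j' :: nat
    assume ij: "i < 4" "j < 4" "i' < 4" "j' < 4" "i \<noteq> j" "i' \<noteq> j'" "(i, j) \<noteq> (i', j')"
    have "set (inner (P i j)) \<subseteq> V" "set (inner (P i' j')) \<subseteq> V"
      using path_in_V[of i j] path_in_V[of i' j'] ij set_inner_subset by (meson order_trans)+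
    then show "set (inner (map f (P i j))) \<inter> set (inner (map f (P i' j'))) = {}"
      using inner_disjoint[OF ij] inj_on_image_Int[OF assms(2)] by (metis image_empty inner_map set_map)
  qed
qed

lemma contains_subdivision_biK4_image:
  assumes "contains_subdivision_biK4 V A" and "inj_on f V" and "A \<subseteq> V \<times> V"
  shows "contains_subdivision_biK4 (f ` V) (map_prod f f ` A)"
  using assms biK4_subdivision_image unfolding contains_subdivision_biK4_iff
  by (metis image_comp image_mono)

context biK4_subdivision
begin

lemma end_in_path: "i < 4 \<Longrightarrow> j < 4 \<Longrightarrow> i \<noteq> j \<Longrightarrow> b j \<in> set (P i j)"
  using path[of i j] last_in_set[of "P i j"] by (fastforce simp: dpath_def)

lemma path_vertex_cases:
  assumes "v \<in> set (P i j)" "i < 4" "j < 4" "i \<noteq> j"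
  shows "v = b i \<or> v = b j \<or> v \<in> set (inner (P i j))"
  using path[OF assms(2-4)] in_set_innerI[OF assms(1)] by metis

lemma shared_vertex_is_end:
  assumes "v \<in> set (P i j)" "v \<in> set (P i' j')" "(i, j) \<noteq> (i', j')"
    and "i < 4" "j < 4" "i' < 4" "j' < 4" "i \<noteq> j" "i' \<noteq> j'"
  shows "v = b i \<or> v = b j"
  using path_vertex_cases[OF assms(1,4,5,8)] path_vertex_cases[OF assms(2,6,7,9)]
    path[OF assms(4,5,8)] path[OF assms(6,7,9)] inner_disjoint[OF assms(4-9,3)] assms(4-7)
  by blast

lemma third_index: "i < 4 \<Longrightarrow> j < 4 \<Longrightarrow> \<exists>m<4. m \<noteq> i \<and> m \<noteq> (j::nat)"
  by (rule exI[of _ "if i \<noteq> 0 \<and> j \<noteq> 0 then 0 else if i \<noteq> 1 \<and> j \<noteq> 1 then 1 else 2"]) auto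

lemma gate_is_end:
  assumes "gate A U g" "i < 4" "j < 4" "b i \<in> U" "b j \<notin> U"
  shows "g = b i \<or> g = b j"
proof -
  have gate_on_path: "g \<in> set (P i' j')" if "i' < 4" "j' < 4" "b i' \<in> U" "b j' \<notin> U" for i' j'
  proof -
    have "i' \<noteq> j'" using that by auto
    then have "dpath A (P i' j')" "hd (P i' j') \<in> U" using path[OF that(1,2)] that(3) by auto
    then show ?thesis
      using gate_on_dpath[OF assms(1)] end_in_path[OF that(1,2) \<open>i' \<noteq> j'\<close>] that(4) by blast
  qed
  have "i \<noteq> j" using assms(4,5) by auto
  obtain m where m: "m < 4" "m \<noteq> i" "m \<noteq> j" using third_index[OF assms(2,3)] by blast
  show ?thesis
  proof (cases "b m \<in> U")
    case True
    then show ?thesis using shared_vertex_is_end[of g i j m j] gate_on_path m assms \<open>i \<noteq> j\<close> by auto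
  next
    case False
    then show ?thesis using shared_vertex_is_end[of g i j i m] gate_on_path m assms \<open>i \<noteq> j\<close> by auto
  qed
qed

end

text \<open>T_d on the vertex set tree_nodes d, with arcs tree_arc d. In G_d, Inl x is the vertex x of
  the hub N and Inr (w, u) is the vertex u of the copy T^w.\<close>
definition tree_nodes :: "nat \<Rightarrow> nat list set" where
  "tree_nodes d = {u. length u \<le> d \<and> set u \<subseteq> {..<d}}"

definition tree_arc :: "nat \<Rightarrow> nat list \<Rightarrow> nat list \<Rightarrow> bool" where
  "tree_arc d u v \<longleftrightarrow> (length u < d \<and> (\<exists>i<d. v = u @ [i])) \<or> strict_prefix v u"

type_synonym vertex = "nat list + nat list \<times> nat list"

definition G_vertices :: "nat \<Rightarrow> vertex set" where
  "G_vertices d = Inl ` tree_nodes d \<union> Inr ` (tree_nodes d \<times> tree_nodes d)"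

definition G_arcs :: "nat \<Rightarrow> (vertex \<times> vertex) set" where
  "G_arcs d =
     {(Inr (w, u), Inr (w, v)) | w u v.
        w \<in> tree_nodes d \<and> u \<in> tree_nodes d \<and> v \<in> tree_nodes d \<and> tree_arc d u v}
   \<union> {(Inr (w, u), Inl w) | w u. w \<in> tree_nodes d \<and> u \<in> tree_nodes d}
   \<union> {(Inl x, Inr (w, u)) | x w u.
        x \<in> tree_nodes d \<and> w \<in> tree_nodes d \<and> u \<in> tree_nodes d \<and> tree_arc d w x}"

lemma G_arcs_simps [simp]:
  "(Inr (w, u), Inr (w', v)) \<in> G_arcs d \<longleftrightarrow>
     w' = w \<and> w \<in> tree_nodes d \<and> u \<in> tree_nodes d \<and> v \<in> tree_nodes d \<and> tree_arc d u v"
  "(Inr (w, u), Inl x) \<in> G_arcs d \<longleftrightarrow> x = w \<and> w \<in> tree_nodes d \<and> u \<in> tree_nodes d"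
  "(Inl x, Inr (w, u)) \<in> G_arcs d \<longleftrightarrow>
     x \<in> tree_nodes d \<and> w \<in> tree_nodes d \<and> u \<in> tree_nodes d \<and> tree_arc d w x"
  "(Inl x, Inl y) \<notin> G_arcs d"
  by (auto simp: G_arcs_def)

lemma finite_tree_nodes: "finite (tree_nodes d)"
  using finite_lists_length_le[of "{..<d}" d] by (simp add: tree_nodes_def conj_commute)

lemma Nil_in_tree_nodes: "[] \<in> tree_nodes d"
  by (simp add: tree_nodes_def)

lemma G_arcs_subset: "G_arcs d \<subseteq> G_vertices d \<times> G_vertices d"
  by (auto simp: G_arcs_def G_vertices_def)

lemma digraph_G: "digraph (G_vertices d) (G_arcs d)"
proof -
  have "(v, v) \<notin> G_arcs d" for v
    by (cases v) (auto simp: tree_arc_def)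
  then show ?thesis
    using G_arcs_subset finite_tree_nodes by (auto simp: digraph_def G_vertices_def)
qed

definition tree_out :: "nat \<Rightarrow> nat list \<Rightarrow> nat \<Rightarrow> nat list" where
  "tree_out d u i = (if length u < d then u @ [i] else take i u)"

lemma tree_out_in_tree_nodes: "u \<in> tree_nodes d \<Longrightarrow> i < d \<Longrightarrow> tree_out d u i \<in> tree_nodes d"
  by (auto simp: tree_out_def tree_nodes_def dest: in_set_takeD)

lemma tree_arc_tree_out: "u \<in> tree_nodes d \<Longrightarrow> i < d \<Longrightarrow> tree_arc d u (tree_out d u i)"
  by (auto simp: tree_out_def tree_arc_def tree_nodes_def strict_prefix_def take_is_prefix)

lemma inj_on_tree_out: "u \<in> tree_nodes d \<Longrightarrow> inj_on (tree_out d u) {..<d}"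
  by (auto simp: tree_out_def tree_nodes_def inj_on_def dest: arg_cong[where f = length])

lemma finite_G_arcs: "finite (G_arcs d)"
  using digraph_G finite_subset G_arcs_subset by (metis digraph_def finite_SigmaI)

lemma G_arcs_loop_free: "\<forall>v. (v, v) \<notin> G_arcs d"
  using digraph_G by (simp add: digraph_def)

lemma arc_linked_piece_to_hub:
  assumes "w \<in> tree_nodes d" "u \<in> tree_nodes d"
  shows "arc_linked (G_arcs d) d (Inr (w, u)) (Inl w)"
  using assms tree_out_in_tree_nodes tree_arc_tree_out
  by (intro arc_linked_via_two_paths[where f = "\<lambda>i. Inr (w, tree_out d u i)"] finite_G_arcs
      G_arcs_loop_free) (auto simp: inj_on_def dest: inj_onD[OF inj_on_tree_out])

lemma arc_linked_reverse_tree_arc: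
  assumes "x \<in> tree_nodes d" "w \<in> tree_nodes d" "tree_arc d w x"
  shows "arc_linked (G_arcs d) d (Inl x) (Inl w)"
  using assms by (intro arc_linked_via_two_paths[where f = "\<lambda>i. Inr (w, [i])"] finite_G_arcs
      G_arcs_loop_free) (auto simp: inj_on_def tree_nodes_def)

lemma arc_linked_to_root:
  "x \<in> tree_nodes d \<Longrightarrow> arc_linked (G_arcs d) d (Inl x) (Inl [])"
proof (induction x rule: rev_induct)
  case (snoc a y)
  then have "y \<in> tree_nodes d" "tree_arc d y (y @ [a])" by (auto simp: tree_nodes_def tree_arc_def)
  then show ?case
    using arc_linked_trans[OF arc_linked_reverse_tree_arc[OF snoc.prems] snoc.IH] by blast
qed (rule arc_linked_refl)

lemma arc_linked_from_root:
  assumes "w \<in> tree_nodes d"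
  shows "arc_linked (G_arcs d) d (Inl []) (Inl w)"
proof (cases "w = []")
  case False
  then have "tree_arc d w []" by (simp add: tree_arc_def strict_prefix_def)
  then show ?thesis using arc_linked_reverse_tree_arc[OF Nil_in_tree_nodes assms] by blast
qed (simp add: arc_linked_refl)

lemma arc_linked_root_to_piece:
  assumes "w \<in> tree_nodes d" "u \<in> tree_nodes d"
  shows "arc_linked (G_arcs d) d (Inl []) (Inr (w, u))"
  using assms tree_out_in_tree_nodes tree_arc_tree_out arc_linked_from_root
  by (intro arc_linked_via_in_neighbours[where f = "\<lambda>i. Inl (tree_out d w i)"] finite_G_arcs)
    (auto simp: inj_on_def dest: inj_onD[OF inj_on_tree_out])

lemma strongly_k_arc_connected_G: "strongly_k_arc_connected (G_vertices d) (G_arcs d) d"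
proof (rule strongly_k_arc_connected_if_arc_linked[OF finite_G_arcs])
  have to_root: "arc_linked (G_arcs d) d v (Inl [])" if "v \<in> G_vertices d" for v
    using that by (auto simp: G_vertices_def
        intro: arc_linked_to_root arc_linked_trans[OF arc_linked_piece_to_hub arc_linked_to_root])
  have from_root: "arc_linked (G_arcs d) d (Inl []) v" if "v \<in> G_vertices d" for v
    using that by (auto simp: G_vertices_def intro: arc_linked_from_root arc_linked_root_to_piece)
  show "arc_linked (G_arcs d) d u v" if "u \<in> G_vertices d" "v \<in> G_vertices d" for u v
    by (rule arc_linked_trans[OF to_root[OF that(1)] from_root[OF that(2)]])
qed

lemma Longest_common_prefix_snoc_not_prefix:
  "xs \<in> L \<Longrightarrow> \<exists>ys\<in>L. \<not> prefix (Longest_common_prefix L @ [t]) ys"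
  using Longest_common_prefix_longest[of L "Longest_common_prefix L @ [t]"] by auto

lemma two_points_avoiding_value:
  assumes "inj_on f A" and "3 \<le> card A"
  obtains a1 a2 where "a1 \<in> A" "a2 \<in> A" "a1 \<noteq> a2" "f a1 \<noteq> c" "f a2 \<noteq> c"
proof -
  have "finite A" using assms(2) card.infinite by fastforce
  have "card (A \<inter> f -` {c}) \<le> 1"
    using assms(1) \<open>finite A\<close> by (auto simp: card_le_Suc0_iff_eq inj_on_def)
  then have "\<not> card (A - f -` {c}) \<le> 1"
    using card_Diff_subset_Int[of A "f -` {c}"] assms(2) \<open>finite A\<close> by simp
  then show ?thesis
    using that \<open>finite A\<close> by (auto simp: card_le_Suc0_iff_eq)
qed

lemma tree_arc_into_subtree:
  assumes "tree_arc d w z" "prefix (c @ [t]) z" "\<not> prefix (c @ [t]) w"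
  shows "w = c \<and> z = c @ [t]"
proof -
  have "\<not> strict_prefix z w"
    using assms(2,3) prefix_order.trans strict_prefix_def by blast
  then obtain i where "z = w @ [i]" using assms(1) by (auto simp: tree_arc_def)
  then show ?thesis using assms(2,3) by auto
qed

lemma G_arcsE:
  assumes "(x, y) \<in> G_arcs d"
  obtains w u v where "x = Inr (w, u)" "y = Inr (w, v)" "tree_arc d u v"
    | w u where "x = Inr (w, u)" "y = Inl w"
    | z w u where "x = Inl z" "y = Inr (w, u)" "tree_arc d w z"
  using assms unfolding G_arcs_def by auto

definition piece :: "nat list \<Rightarrow> vertex set" where
  "piece w = range (\<lambda>u. Inr (w, u))"

definition piece_subtree :: "nat list \<Rightarrow> nat list \<Rightarrow> vertex set" where
  "piece_subtree w c = {Inr (w, u) | u. prefix c u}"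

lemma piece_subtree_subset: "piece_subtree w c \<subseteq> piece w"
  by (auto simp: piece_subtree_def piece_def)

definition region :: "nat list \<Rightarrow> vertex set" where
  "region c = {Inl z | z. prefix c z} \<union> {Inr (w, u) | w u. prefix c w}"

lemma gate_piece: "gate (G_arcs d) (piece w) (Inl w)"
  unfolding gate_def piece_def by (auto elim: G_arcsE)

lemma gate_region: "gate (G_arcs d) (region (c @ [t])) (Inl (c @ [t]))"
  unfolding gate_def region_def by (auto elim!: G_arcsE dest: tree_arc_into_subtree)

lemma gate_region_piece: "gate (G_arcs d) (region (c @ [t]) \<union> piece c) (Inl c)"
  unfolding gate_def region_def piece_def by (auto elim!: G_arcsE dest: tree_arc_into_subtree)

locale G_subdivision = biK4_subdivision "G_arcs d" b P
  for d :: nat and b :: "nat \<Rightarrow> vertex" and P :: "nat \<Rightarrow> nat \<Rightarrow> vertex list"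
begin

lemma branch_outside_piece:
  assumes "i < 4" "b i \<in> piece w" "j < 4" "b j \<notin> piece w"
  shows "b j = Inl w"
  using gate_is_end[OF gate_piece assms(1,3,2,4)] assms(2) by (auto simp: piece_def)

lemma card_branch_in_piece:
  assumes "i0 < 4" "b i0 \<in> piece w"
  defines "I \<equiv> {i. i < 4 \<and> b i \<in> piece w}"
  shows "3 \<le> card I" and "Inl w \<notin> b ` {..<4} \<Longrightarrow> I = {..<4}"
proof -
  have outside: "b i = Inl w" if "i \<in> {..<4} - I" for i
    using branch_outside_piece[OF assms(1,2)] that by (simp add: I_def)
  then have "\<forall>i1\<in>{..<4} - I. \<forall>i2\<in>{..<4} - I. i1 = i2"
    using inj_branch by (metis DiffD1 inj_onD)
  then have "card ({..<4} - I) \<le> 1" by (simp add: card_le_Suc0_iff_eq)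
  moreover have "I \<subseteq> {..<4}" by (auto simp: I_def)
  moreover have "card ({..<4::nat} - I) = 4 - card I"
    using card_Diff_subset[OF finite_subset[OF \<open>I \<subseteq> {..<4}\<close>] \<open>I \<subseteq> {..<4}\<close>] by simp
  moreover have "card I \<le> 4" using card_mono[OF _ \<open>I \<subseteq> {..<4}\<close>] by simp
  ultimately show "3 \<le> card I" by linarith
  show "I = {..<4}" if "Inl w \<notin> b ` {..<4}"
  proof (rule subset_antisym[OF \<open>I \<subseteq> {..<4}\<close>], rule subsetI, rule ccontr)
    fix i assume "i \<in> {..<4}" "i \<notin> I"
    then have "b i = Inl w" using outside by simp
    then show False using that \<open>i \<in> {..<4}\<close> by (metis image_eqI)
  qed
qed

lemma path_leaving_piece:
  assumes "i < 4" "j < 4" "i \<noteq> j" "b i \<in> piece w" "\<not> set (P i j) \<subseteq> piece w"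
  shows "Inl w \<in> set (P i j)"
proof -
  obtain x where "x \<in> set (P i j)" "x \<notin> piece w" using assms(5) by blast
  moreover have "dpath (G_arcs d) (P i j)" "hd (P i j) \<in> piece w" using path[OF assms(1-3)] assms(4) by auto
  ultimately show ?thesis using gate_on_dpath[OF gate_piece] by blast
qed

lemma path_entering_subtree:
  assumes "i < 4" "j < 4" "i \<noteq> j" "set (P i j) \<subseteq> piece w"
    and "b i \<notin> piece_subtree w (c @ [t])" "b j \<in> piece_subtree w (c @ [t])"
  shows "Inr (w, c) \<in> set (P i j) \<and> Inr (w, c @ [t]) \<in> set (P i j)"
proof -
  obtain x y where xy: "(x, y) \<in> G_arcs d" "x \<notin> piece_subtree w (c @ [t])" "y \<in> piece_subtree w (c @ [t])"
    "x \<in> set (P i j)" "y \<in> set (P i j)"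
    using dpath_leaves_set[of "G_arcs d" "P i j" "- piece_subtree w (c @ [t])" "b j"]
      path[OF assms(1-3)] end_in_path[OF assms(1-3)] assms(5,6) by auto
  moreover have "x \<in> piece w" "y \<in> piece w" using assms(4) xy(4,5) by auto
  ultimately obtain u v where "x = Inr (w, u)" "y = Inr (w, v)" by (auto simp: piece_def)
  with xy have "tree_arc d u v" "\<not> prefix (c @ [t]) u" "prefix (c @ [t]) v"
    by (auto simp: piece_subtree_def)
  then show ?thesis using tree_arc_into_subtree xy(4,5) \<open>x = Inr (w, u)\<close> \<open>y = Inr (w, v)\<close> by blast
qed

lemma path_entering_subtree_unique:
  assumes "i < 4" "j < 4" "i \<noteq> j" "set (P i j) \<subseteq> piece w"
    and "b i \<notin> piece_subtree w (c @ [t])" "b j \<in> piece_subtree w (c @ [t])"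
    and "i' < 4" "j' < 4" "i' \<noteq> j'" "set (P i' j') \<subseteq> piece w"
    and "b i' \<notin> piece_subtree w (c @ [t])" "b j' \<in> piece_subtree w (c @ [t])"
  shows "i = i' \<and> j = j'"
proof (rule ccontr)
  assume "\<not> (i = i' \<and> j = j')"
  then have ne: "(i, j) \<noteq> (i', j')" "(i', j') \<noteq> (i, j)" by auto
  note on_paths = path_entering_subtree[OF assms(1-6)] path_entering_subtree[OF assms(7-12)]
  have "Inr (w, c @ [t]) \<in> piece_subtree w (c @ [t])" "Inr (w, c) \<notin> piece_subtree w (c @ [t])"
    by (auto simp: piece_subtree_def dest: prefix_length_le)
  then have "b j = Inr (w, c @ [t])" "b j' = Inr (w, c @ [t])" "b i = Inr (w, c)" "b i' = Inr (w, c)"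
    using shared_vertex_is_end[OF _ _ ne(1) assms(1,2,7,8,3,9)]
      shared_vertex_is_end[OF _ _ ne(2) assms(7,8,1,2,9,3)] on_paths assms(5,6,11,12) by metis+
  then show False
    using ne inj_onD[OF inj_branch] assms(1,2,7,8) by (metis lessThan_iff)
qed

lemma path_between_piece_vertices:
  assumes "i < 4" "j < 4" "i \<noteq> j" "b i \<in> piece w" "b j \<in> piece w"
  shows "set (P i j) \<subseteq> piece w \<or> Inl w \<in> set (inner (P i j))"
proof (cases "set (P i j) \<subseteq> piece w")
  case False
  then have "Inl w \<in> set (P i j)" using path_leaving_piece assms(1-4) by blast
  moreover have "Inl w \<noteq> b i" "Inl w \<noteq> b j" using assms(4,5) by (auto simp: piece_def)
  ultimately show ?thesis using path_vertex_cases assms(1-3) by blast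
qed simp

lemma not_all_branches_in_hub:
  assumes "\<And>i. i < 4 \<Longrightarrow> b i \<in> range Inl"
  shows False
proof -
  define x where "x i = projl (b i)" for i
  have b_x: "b i = Inl (x i)" if "i < 4" for i using assms[OF that] by (auto simp: x_def)
  have inj_x: "inj_on x {..<4}"
    using inj_branch b_x by (simp add: inj_on_def)
  define c where "c = Longest_common_prefix (x ` {..<4})"
  have child: "x i = c @ [x i ! length c]" if i: "i < 4" and ne: "x i \<noteq> c" for i
  proof -
    define c' where "c' = c @ [x i ! length c]"
    have "prefix c (x i)" unfolding c_def using i by (simp add: Longest_common_prefix_prefix)
    then have "prefix c' (x i)"
      unfolding c'_def using ne by (simp add: append_one_prefix prefix_length_less strict_prefix_def)
    moreover obtain j where "j < 4" "\<not> prefix c' (x j)"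
      using Longest_common_prefix_snoc_not_prefix[of "x i" "x ` {..<4}" "x i ! length c"] i
      by (auto simp: c'_def c_def)
    ultimately have "b i \<in> region c'" "b j \<notin> region c'"
      using b_x i by (auto simp: region_def)
    moreover have "Inl c' \<in> region c'" by (simp add: region_def)
    ultimately have "b i = Inl c'"
      using gate_is_end[OF gate_region[of d c "x i ! length c", folded c'_def] i \<open>j < 4\<close>] by auto
    then show ?thesis using b_x[OF i] by (simp add: c'_def)
  qed
  obtain i1 i2 where i12: "i1 < 4" "i2 < 4" "i1 \<noteq> i2" "x i1 \<noteq> c" "x i2 \<noteq> c"
    using two_points_avoiding_value[OF inj_x] by auto
  have gate: "gate (G_arcs d) (region (x i1) \<union> piece c) (Inl c)"
    using gate_region_piece[of d c "x i1 ! length c"] child[OF i12(1,4)] by simp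
  have "x i1 \<noteq> x i2" using inj_x i12(1-3) by (auto dest: inj_onD)
  then have "\<not> prefix (x i1) (x i2)"
    using child[OF i12(1,4)] child[OF i12(2,5)] by (metis Cons_prefix_Cons same_prefix_prefix)
  then have "b i1 \<in> region (x i1) \<union> piece c" "b i2 \<notin> region (x i1) \<union> piece c"
    using b_x i12(1,2) by (auto simp: region_def piece_def)
  then have "Inl c = b i1 \<or> Inl c = b i2" using gate_is_end[OF gate i12(1,2)] by simp
  then show False using b_x i12 by auto
qed

lemma card_paths_into_piece_subtree:
  assumes K: "\<And>i. i \<in> K \<Longrightarrow> i < 4 \<and> b i \<in> piece w \<and> b i \<notin> piece_subtree w (c @ [t])"
    and J: "\<And>j. j \<in> J \<Longrightarrow> j < 4 \<and> b j \<in> piece_subtree w (c @ [t])"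
  shows "card (K \<times> J) \<le> (if Inl w \<in> b ` {..<4} then 1 else 2)"
proof -
  have valid: "i < 4" "j < 4" "i \<noteq> j" "b i \<in> piece w" "b j \<in> piece w"
    "b i \<notin> piece_subtree w (c @ [t])" "b j \<in> piece_subtree w (c @ [t])"
    if "(i, j) \<in> K \<times> J" for i j
    using that K J by (auto intro: subsetD[OF piece_subtree_subset])
  have "K \<subseteq> {..<4}" "J \<subseteq> {..<4}" using K J by auto
  then have "finite (K \<times> J)" by (simp add: finite_subset)
  define S where "S = {q \<in> K \<times> J. set (P (fst q) (snd q)) \<subseteq> piece w}"
  define L where "L = {q \<in> K \<times> J. Inl w \<in> set (inner (P (fst q) (snd q)))}"
  have cover: "K \<times> J \<subseteq> S \<union> L"
  proof
    fix q assume "q \<in> K \<times> J"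
    then obtain i j where "q = (i, j)" "(i, j) \<in> K \<times> J" by auto
    then show "q \<in> S \<union> L"
      using path_between_piece_vertices[OF valid(1-5)[OF \<open>(i, j) \<in> K \<times> J\<close>]]
      by (auto simp: S_def L_def)
  qed
  have "finite S" "finite L" using \<open>finite (K \<times> J)\<close> by (simp_all add: S_def L_def)
  then have "card (K \<times> J) \<le> card S + card L"
    using card_mono[OF finite_UnI cover] card_Un_le[of S L] by linarith
  moreover have "card S \<le> 1"
  proof -
    have "q = q'" if "q \<in> S" "q' \<in> S" for q q'
      using that valid[of "fst q" "snd q"] valid[of "fst q'" "snd q'"]
        path_entering_subtree_unique[of "fst q" "snd q" w c t "fst q'" "snd q'"]
      by (auto simp: S_def prod_eq_iff)
    then show ?thesis by (simp add: card_le_Suc0_iff_eq[OF \<open>finite S\<close>])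
  qed
  moreover have "card L \<le> 1"
  proof -
    have "q = q'" if "q \<in> L" "q' \<in> L" for q q'
      using that valid[of "fst q" "snd q"] valid[of "fst q'" "snd q'"]
        inner_disjoint[of "fst q" "snd q" "fst q'" "snd q'"]
      by (auto simp: L_def prod_eq_iff)
    then show ?thesis by (simp add: card_le_Suc0_iff_eq[OF \<open>finite L\<close>])
  qed
  moreover have "card L = 0" if "Inl w \<in> b ` {..<4}"
  proof -
    have "L = {}"
      using that path[OF valid(1-3)] by (fastforce simp: L_def)
    then show ?thesis by simp
  qed
  ultimately show ?thesis by auto
qed

lemma no_branch_in_piece:
  assumes "i0 < 4" "b i0 \<in> piece w"
  shows False
proof -
  define I where "I = {i. i < 4 \<and> b i \<in> piece w}"
  have "I \<subseteq> {..<4}" by (auto simp: I_def)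
  then have "finite I" by (simp add: finite_subset)
  define y where "y i = snd (projr (b i))" for i
  have b_y: "b i = Inr (w, y i)" if "i \<in> I" for i using that by (auto simp: I_def piece_def y_def)
  have inj_y: "inj_on y I"
  proof (rule inj_onI)
    fix i j assume "i \<in> I" "j \<in> I" "y i = y j"
    then show "i = j" using b_y inj_onD[OF inj_branch] \<open>I \<subseteq> {..<4}\<close> by (metis subsetD)
  qed
  define c where "c = Longest_common_prefix (y ` I)"
  obtain j1 where j1: "j1 \<in> I" "y j1 \<noteq> c"
    using two_points_avoiding_value[OF inj_y card_branch_in_piece(1)[OF assms, folded I_def]] by metis
  define t where "t = y j1 ! length c"
  have subtree_iff: "b i \<in> piece_subtree w (c @ [t]) \<longleftrightarrow> prefix (c @ [t]) (y i)" if "i \<in> I" for i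
    using b_y[OF that] by (auto simp: piece_subtree_def)
  define K where "K = {i \<in> I. b i \<notin> piece_subtree w (c @ [t])}"
  define J where "J = {i \<in> I. b i \<in> piece_subtree w (c @ [t])}"
  have "K \<noteq> {}"
    using Longest_common_prefix_snoc_not_prefix[of "y j1" "y ` I" t] j1 subtree_iff
    by (auto simp: K_def c_def)
  have "j1 \<in> J"
    using j1 subtree_iff Longest_common_prefix_prefix[of "y j1" "y ` I"]
    by (auto simp: J_def t_def c_def append_one_prefix prefix_length_less strict_prefix_def)
  have "finite K" "finite J" "K \<inter> J = {}" "K \<union> J = I"
    using \<open>finite I\<close> by (auto simp: K_def J_def)
  then have "card K + card J = card I" by (metis card_Un_disjoint)
  moreover have "card K \<ge> 1" "card J \<ge> 1"
    using \<open>K \<noteq> {}\<close> \<open>j1 \<in> J\<close> \<open>finite K\<close> \<open>finite J\<close> by (auto simp: Suc_le_eq card_gt_0_iff)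
  ultimately have "card I \<le> card (K \<times> J) + 1"
    by (cases "card K"; cases "card J") (auto simp: card_cartesian_product)
  moreover have "card (K \<times> J) \<le> (if Inl w \<in> b ` {..<4} then 1 else 2)"
    by (rule card_paths_into_piece_subtree) (auto simp: K_def J_def I_def)
  ultimately show False
    using card_branch_in_piece[OF assms, folded I_def] by (auto split: if_splits)
qed

end

lemma no_subdivision_G: "\<not> contains_subdivision_biK4 (G_vertices d) (G_arcs d)"
proof
  assume "contains_subdivision_biK4 (G_vertices d) (G_arcs d)"
  then obtain b P where "biK4_subdivision (G_arcs d) b P"
    unfolding contains_subdivision_biK4_iff by blast
  then interpret G_subdivision d b P unfolding G_subdivision_def .
  show False
  proof (rule not_all_branches_in_hub)
    fix i :: nat assume "i < 4"
    show "b i \<in> range Inl"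
    proof (cases "b i")
      case (Inr p)
      then have "b i \<in> piece (fst p)" by (cases p) (auto simp: piece_def)
      then show ?thesis using no_branch_in_piece \<open>i < 4\<close> by blast
    qed simp
  qed
qed

theorem proposition1p10:
  fixes k :: nat
  shows "\<exists>(V :: nat set) A. digraph V A \<and> 2 \<le> card V \<and> strongly_k_arc_connected V A k
           \<and> \<not> contains_subdivision_biK4 V A"
proof -
  let ?V = "to_nat ` G_vertices k" and ?A = "map_prod to_nat to_nat ` G_arcs k"
  have inj: "inj_on to_nat (G_vertices k)" by (simp add: inj_on_subset)
  have "finite (G_vertices k)" using digraph_G by (simp add: digraph_def)
  moreover have "{Inl [], Inr ([], [])} \<subseteq> G_vertices k" by (simp add: G_vertices_def Nil_in_tree_nodes)
  ultimately have "card {Inl [], Inr ([], []) :: vertex} \<le> card (G_vertices k)" by (rule card_mono)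
  then have "2 \<le> card ?V" by (simp add: card_image[OF inj])
  moreover have "\<not> contains_subdivision_biK4 ?V ?A"
  proof
    assume "contains_subdivision_biK4 ?V ?A"
    then have "contains_subdivision_biK4 (from_nat ` ?V :: vertex set) (map_prod from_nat from_nat ` ?A)"
      by (rule contains_subdivision_biK4_image) (auto simp: inj_on_def dest: subsetD[OF G_arcs_subset])
    then show False using no_subdivision_G by (simp add: image_image map_prod_def split_def)
  qed
  ultimately show ?thesis
    using digraph_image[OF inj digraph_G] strongly_k_arc_connected_image[OF inj G_arcs_subset
        strongly_k_arc_connected_G] by blast
qed

end
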